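(* Assume the standing hypotheses, let $\sigma\in(0,1)$, $C_1>0$, $\gamma\in[0,2)$ and $C_8>0$. Then there exist $\rho>0$ and $\bar\mu\in(0,\hat\mu]$ such that the following holds for all $\mu\in(0,\bar\mu]$ and all $(x,\lambda)\in\mathcal B((x^*,\lambda^* ),\delta)$ with $x>0,\lambda>0$, $\|(x,\lambda)-(x^\mu,\lambda^\mu)\|<\rho$, $\|F_\mu(x,\lambda)\|\le C_1\mu$ and $\|(\Delta x_{\mathcal A}^N,\Delta\lambda_{\mathcal I}^N)\|\ge C_8\mu^\gamma$, where $(\Delta x^N,\Delta\lambda^N)$ is the Newton direction for $\mu^+=\sigma\mu$. Define $(\Delta x,\Delta\lambda)$ by: for $i\in\mathcal A$, $\Delta x_i\in\{\Delta x_i^S,\Delta x_i^C\}$ (chosen arbitrarily per index) and $\Delta\lambda_i=0$; for $i\in\mathcal I$, $\Delta x_i=0$ and $\Delta\lambda_i=\Delta\lambda_i^C$. With $(x_+^N,\lambda_+^N)=(x,\lambda)+(\Delta x^N,\Delta\lambda^N)$ and $(x_+,\lambda_+)=(x,\lambda)+(\Delta x,\Delta\lambda)$, $$\|(x_+^N,\lambda_+^N)-(x_+,\lambda_+)\|\le\|(x_+^N,\lambda_+^N)-(x,\lambda)\|.$$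
   Context: Problem: minimize $f(x)$ subject to $x\ge0$, $f:\mathbb R^n\to\mathbb R$ twice continuously differentiable with locally Lipschitz Hessian. Norms Euclidean; $e$ all-ones; $X=\mathrm{diag}(x)$, $\Lambda=\mathrm{diag}(\lambda)$; $F_\mu(x,\lambda)=\begin{bmatrix}\nabla f(x)-\lambda\\ \Lambda Xe-\mu e\end{bmatrix}$, $F'(x,\lambda)=\begin{bmatrix}\nabla^2f(x)&-I\\ \Lambda&X\end{bmatrix}$. The Newton direction for $\mu^+=\sigma\mu$ solves $F'(x,\lambda)(\Delta x^N,\Delta\lambda^N)=-F_{\mu^+}(x,\lambda)$. Approximations: $\Delta x_i^S=-\frac{x_i[\nabla f(x)]_i-\mu^+}{x_i[\nabla^2f(x)]_{ii}+\lambda_i}$, $\Delta x_i^C=-x_i+\mu^+/\lambda_i$, $\Delta\lambda_i^C=-\lambda_i+\mu^+/x_i$. Standing hypotheses: $(x^*,\lambda^* )$ satisfies $\nabla f(x^* )=\lambda^*$, $x^*\ge0$, $\lambda^*\ge0$, $x_i^*\lambda_i^*=0$, $x^*+\lambda^*>0$, $[\nabla^2f(x^* )]_{\mathcal I\mathcal I}\succ0$, where $\mathcal A=\{i:x^*_i=0\}$, $\mathcal I=\{i:x_i^*>0\}$; subscripts $\mathcal A,\mathcal I$ denote sub-vectors. $\delta>0$: $F'$ nonsingular on $\mathcal B((x^*,\lambda^* ),\delta)$ with $\|F'^{-1}\|\le M$; $\hat\mu>0$: for $\mu\in(0,\hat\mu]$ a Lipschitz barrier trajectory $(x^\mu,\lambda^\mu)\in\mathcal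 B((x^*,\lambda^* ),\delta)$ with $F_\mu(x^\mu,\lambda^\mu)=0$, $\|(x^\mu,\lambda^\mu)-(x^*,\lambda^* )\|\le C_4\mu$ exists. *)

theory Defs
  imports "HOL-Analysis.Analysis"
begin

text \<open>Primal-dual pairs (x, lambda)
 live in (real^'n) \<times> (real^'n), whose norm is the Euclidean norm of the stacked vector.\<close>

definition Fmu :: "real \<Rightarrow> (real^'n \<Rightarrow> real^'n) \<Rightarrow> real^'n \<Rightarrow> real^'n \<Rightarrow> (real^'n) \<times> (real^'n)" where
  "Fmu mu grad x l = (grad x - l, (\<chi> i. l$i * x$i - mu))"

definition Fprime :: "(real^'n \<Rightarrow> real^'n^'n) \<Rightarrow> real^'n \<Rightarrow> real^'n
    \<Rightarrow> (real^'n) \<times> (real^'n) \<Rightarrow> (real^'n) \<times> (real^'n)" where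
  "Fprime hess x l = (\<lambda>(dx, dl). (hess x *v dx - dl, (\<chi> i. l$i * dx$i + x$i * dl$i)))"

definition dxS :: "(real^'n \<Rightarrow> real^'n) \<Rightarrow> (real^'n \<Rightarrow> real^'n^'n) \<Rightarrow> real
    \<Rightarrow> real^'n \<Rightarrow> real^'n \<Rightarrow> 'n \<Rightarrow> real" where
  "dxS grad hess mup x l i = - (x$i * grad x $ i - mup) / (x$i * hess x $ i $ i + l$i)"

definition dxC :: "real \<Rightarrow> real^'n \<Rightarrow> real^'n \<Rightarrow> 'n \<Rightarrow> real" where
  "dxC mup x l i = - x$i + mup / l$i"

definition dlC :: "real \<Rightarrow> real^'n \<Rightarrow> real^'n \<Rightarrow> 'n \<Rightarrow> real" where
  "dlC mup x l i = - l$i + mup / x$i"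

end

theory Submission
  imports Defs
begin

text \<open>Each component of the approximate step solves the i-th Newton equations with one coupling
  dropped: the off-diagonal Hessian terms for Delta x^S, the term x_i Delta lambda_i for
  Delta x^C, and l_i Delta x_i for Delta lambda^C. So on the blocks (Delta x_A, Delta lambda_I) it
  differs from the Newton step by x_i resp. l_i times O(|Newton step|). Near the KKT point,
  strict complementarity and |X Lambda e - mu e| = O(mu) make these x_i and l_i O(mu), and the
  Newton step is O(mu) because F' has a bounded inverse; the resulting O(mu^2) discrepancy lies
  below C8 mu^gamma, hence below the size of that block of the Newton step. Off the blocks the
  approximate step vanishes, and Pythagoras turns the blockwise comparison into the claim.\<close>

lemma linear_Fprime: "linear (Fprime hess (x::real^'n) l)"
proof (rule linearI)
  fix a b :: "(real^'n) \<times> (real^'n)" and c :: real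
  show "Fprime hess x l (a + b) = Fprime hess x l a + Fprime hess x l b"
    by (cases a; cases b) (simp add: Fprime_def vec_eq_iff matrix_vector_right_distrib algebra_simps)
  show "Fprime hess x l (c *\<^sub>R a) = c *\<^sub>R Fprime hess x l a"
    by (cases a) (simp add: Fprime_def vec_eq_iff matrix_vector_mult_scaleR algebra_simps)
qed

lemma norm_le_onorm_inv_Fprime:
  assumes "bij (Fprime hess x l)" "onorm (inv (Fprime hess x l)) \<le> M" "Fprime hess x l d = y"
  shows "norm d \<le> \<bar>M\<bar> * norm y"
proof -
  let ?F = "Fprime hess x l"
  have "inj ?F" using assms(1) bij_is_inj by blast
  have "bounded_linear ?F" using linear_Fprime linear_conv_bounded_linear by blast
  then have "bounded_linear (inv ?F)" using \<open>inj ?F\<close> by (rule inj_linear_imp_inv_bounded_linear)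
  have "d = inv ?F y" using \<open>inj ?F\<close> assms(3) by (metis inv_f_f)
  hence "norm d \<le> onorm (inv ?F) * norm y" using onorm[OF \<open>bounded_linear (inv ?F)\<close>] by simp
  also have "\<dots> \<le> \<bar>M\<bar> * norm y" using assms(2) by (intro mult_right_mono) auto
  finally show ?thesis .
qed

lemma Fprime_eq_neg_FmuD:
  assumes "Fprime hess x l (dx, dl) = - Fmu s grad x l"
  shows "(hess x *v dx)$i - dl$i = l$i - grad x $ i"
    and "l$i * dx$i + x$i * dl$i = s - l$i * x$i"
  using arg_cong[OF assms, of "\<lambda>p. fst p $ i"] arg_cong[OF assms, of "\<lambda>p. snd p $ i"]
  by (simp_all add: Fprime_def Fmu_def)

lemma norm_le_card_mult:
  assumes "\<And>i. \<bar>v$i\<bar> \<le> b"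
  shows "norm (v::real^'n) \<le> real CARD('n) * b"
proof -
  have "norm v \<le> (\<Sum>i\<in>UNIV. \<bar>v$i\<bar>)" by (rule norm_le_l1_cart)
  also have "\<dots> \<le> real CARD('n) * b" using assms by (intro sum_bounded_above) auto
  finally show ?thesis .
qed

lemma norm_Fmu_le:
  fixes x l :: "real^'n"
  shows "norm (Fmu s grad x l) \<le> norm (Fmu t grad x l) + real CARD('n) * \<bar>t - s\<bar>"
proof -
  have "Fmu s grad x l = Fmu t grad x l + (0, \<chi> i. t - s)"
    by (simp add: Fmu_def vec_eq_iff)
  hence "norm (Fmu s grad x l) \<le> norm (Fmu t grad x l) + norm ((\<chi> i. t - s)::real^'n)"
    using norm_triangle_ineq[of "Fmu t grad x l" "(0, \<chi> i. t - s)"] by (simp add: norm_Pair)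
  also have "norm ((\<chi> i. t - s)::real^'n) \<le> real CARD('n) * \<bar>t - s\<bar>"
    by (rule norm_le_card_mult) simp
  finally show ?thesis by simp
qed

lemma abs_complementarity_le_norm_Fmu: "\<bar>l$i * x$i - mu\<bar> \<le> norm (Fmu mu grad x l)"
proof -
  have "\<bar>snd (Fmu mu grad x l) $ i\<bar> \<le> norm (snd (Fmu mu grad x l))" by (rule component_le_norm_cart)
  also have "\<dots> \<le> norm (Fmu mu grad x l)" by (cases "Fmu mu grad x l") (simp add: norm_snd_le)
  finally show ?thesis by (simp add: Fmu_def)
qed

lemma norm_Newton_step_le:
  fixes x l dx dl :: "real^'n" and sigma mu C M :: real
  assumes "bij (Fprime hess x l)" "onorm (inv (Fprime hess x l)) \<le> M"
    and "Fprime hess x l (dx, dl) = - Fmu (sigma * mu) grad x l"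
    and "norm (Fmu mu grad x l) \<le> C * mu" "0 < mu" "0 < sigma" "sigma < 1"
  shows "norm (dx, dl) \<le> \<bar>M\<bar> * (C + real CARD('n)) * mu"
proof -
  have "norm (Fmu (sigma * mu) grad x l) \<le> C * mu + real CARD('n) * \<bar>mu - sigma * mu\<bar>"
    using norm_Fmu_le[of "sigma * mu" grad x l mu] assms(4) by linarith
  also have "\<bar>mu - sigma * mu\<bar> \<le> mu" using assms(5-7) by (simp add: abs_le_iff algebra_simps)
  hence "C * mu + real CARD('n) * \<bar>mu - sigma * mu\<bar> \<le> (C + real CARD('n)) * mu"
    by (simp add: algebra_simps mult_left_mono)
  finally have "norm (Fmu (sigma * mu) grad x l) \<le> (C + real CARD('n)) * mu" .
  hence "\<bar>M\<bar> * norm (Fmu (sigma * mu) grad x l) \<le> \<bar>M\<bar> * (C + real CARD('n)) * mu"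
    by (simp add: mult_left_mono mult.assoc)
  with norm_le_onorm_inv_Fprime[OF assms(1,2,3)] show ?thesis by simp
qed

lemma abs_matrix_vector_nth_le: "\<bar>(A *v v) $ i\<bar> \<le> norm A * norm (v::real^'n)"
proof -
  have "\<bar>(A *v v) $ i\<bar> \<le> norm (A $ i) * norm v"
    unfolding matrix_vector_mul_component by (rule Cauchy_Schwarz_ineq2)
  also have "\<dots> \<le> norm A * norm v" by (intro mult_right_mono Finite_Cartesian_Product.norm_nth_le) simp
  finally show ?thesis .
qed

lemma abs_matrix_nth_nth_le: "\<bar>(A::real^'n^'m) $ i $ j\<bar> \<le> norm A"
  using component_le_norm_cart[of "A $ i" j] Finite_Cartesian_Product.norm_nth_le[of A i] by linarith

lemma scaled_step_sub_Newton_eq: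
  fixes x h l g hv dl dN s :: real
  assumes "x * h + l \<noteq> 0" "hv - dl = l - g" "l * dN + x * dl = s - l * x"
  shows "- (x * g - s) / (x * h + l) - dN = x * (hv - h * dN) / (x * h + l)"
proof -
  have "- (x * g - s) - (x * h + l) * dN = x * (hv - h * dN)" using assms(2,3) by algebra
  with assms(1) show ?thesis by (simp add: field_simps)
qed

lemma abs_centering_step_sub_Newton_le:
  fixes x l dl dN s c b nd :: real
  assumes "0 < c" "c / 2 \<le> l" "0 \<le> x" "x \<le> b" "\<bar>dl\<bar> \<le> nd"
    and "l * dN + x * dl = s - l * x"
  shows "\<bar>(- x + s / l) - dN\<bar> \<le> 2 * b * nd / c"
proof -
  have "0 < l" using assms(1,2) by linarith
  have "\<bar>x * dl\<bar> \<le> b * nd"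
    unfolding abs_mult using assms(3-5) by (intro mult_mono) auto
  hence "\<bar>x * dl\<bar> / l \<le> b * nd / (c / 2)"
    using assms(1,2) \<open>0 < l\<close> by (intro frac_le) auto
  also have "\<dots> = 2 * b * nd / c" by simp
  finally have "\<bar>x * dl / l\<bar> \<le> 2 * b * nd / c" using \<open>0 < l\<close> by simp
  moreover have "(- x + s / l) - dN = x * dl / l" using assms(6) \<open>0 < l\<close> by (simp add: field_simps)
  ultimately show ?thesis by simp
qed

lemma active_step_sub_Newton_le:
  fixes x l dxN dlN :: "real^'n"
  assumes Newton: "Fprime hess x l (dxN, dlN) = - Fmu s grad x l"
    and c: "0 < c" "c / 2 \<le> l$i"
    and x: "0 \<le> x$i" "x$i \<le> b"
    and H: "norm (hess x) \<le> H" "b * H \<le> c / 4"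
    and dx: "dx = dxS grad hess s x l i \<or> dx = dxC s x l i"
  shows "\<bar>dx - dxN$i\<bar> \<le> (8 * H + 2) * b * norm (dxN, dlN) / c"
proof -
  let ?nd = "norm (dxN, dlN)" and ?h = "hess x $ i $ i" and ?hv = "(hess x *v dxN) $ i"
  have dxN: "\<bar>dxN$i\<bar> \<le> ?nd" and dlN: "\<bar>dlN$i\<bar> \<le> ?nd"
    using component_le_norm_cart[of dxN i] component_le_norm_cart[of dlN i]
      norm_fst_le[of dxN dlN] norm_snd_le[of dlN dxN] by linarith+
  have h: "\<bar>?h\<bar> \<le> H" using abs_matrix_nth_nth_le[of "hess x" i i] H(1) by linarith
  have hv: "\<bar>?hv\<bar> \<le> H * ?nd"
    using abs_matrix_vector_nth_le[of "hess x" dxN i] H(1) norm_fst_le[of dxN dlN]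
    by (smt (verit) mult_mono norm_ge_zero)
  have "0 \<le> b" "0 \<le> H" "0 \<le> ?nd" using x H(1) norm_ge_zero order_trans by blast+
  have "\<bar>x$i * ?h\<bar> \<le> b * H" unfolding abs_mult using x h by (intro mult_mono) auto
  hence den: "c / 4 \<le> x$i * ?h + l$i" using c H(2) by (simp add: abs_le_iff)
  have "\<bar>dxS grad hess s x l i - dxN$i\<bar> \<le> 8 * H * b * ?nd / c"
  proof -
    have "\<bar>?h * dxN$i\<bar> \<le> H * ?nd"
      unfolding abs_mult using h dxN \<open>0 \<le> H\<close> by (intro mult_mono) auto
    hence "\<bar>?hv - ?h * dxN$i\<bar> \<le> 2 * H * ?nd"
      using hv abs_triangle_ineq4[of ?hv "?h * dxN$i"] by linarith
    hence "\<bar>x$i * (?hv - ?h * dxN$i)\<bar> \<le> b * (2 * H * ?nd)"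
      unfolding abs_mult using x \<open>0 \<le> H\<close> \<open>0 \<le> ?nd\<close> by (intro mult_mono) auto
    hence "\<bar>x$i * (?hv - ?h * dxN$i)\<bar> / (x$i * ?h + l$i) \<le> b * (2 * H * ?nd) / (c / 4)"
      using den c \<open>0 \<le> b\<close> \<open>0 \<le> H\<close> \<open>0 \<le> ?nd\<close> by (intro frac_le) auto
    also have "\<dots> = 8 * H * b * ?nd / c" by simp
    finally have "\<bar>x$i * (?hv - ?h * dxN$i) / (x$i * ?h + l$i)\<bar> \<le> 8 * H * b * ?nd / c"
      using den c by simp
    moreover have "x$i * ?h + l$i \<noteq> 0" using den c by linarith
    ultimately show ?thesis
      unfolding dxS_def
      using scaled_step_sub_Newton_eq[OF _ Fprime_eq_neg_FmuD[OF Newton, of i]] by simp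
  qed
  moreover have "\<bar>dxC s x l i - dxN$i\<bar> \<le> 2 * b * ?nd / c"
    unfolding dxC_def
    using abs_centering_step_sub_Newton_le[OF c x dlN Fprime_eq_neg_FmuD(2)[OF Newton]] .
  moreover have "8 * H * b * ?nd / c \<le> (8 * H + 2) * b * ?nd / c"
    and "2 * b * ?nd / c \<le> (8 * H + 2) * b * ?nd / c"
    using c \<open>0 \<le> b\<close> \<open>0 \<le> H\<close> \<open>0 \<le> ?nd\<close>
    by (auto intro!: divide_right_mono mult_right_mono)
  ultimately show ?thesis using dx by auto
qed

lemma inactive_step_sub_Newton_le:
  fixes x l dxN dlN :: "real^'n"
  assumes Newton: "Fprime hess x l (dxN, dlN) = - Fmu s grad x l"
    and "0 < c" "c / 2 \<le> x$i" "0 \<le> l$i" "l$i \<le> b"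
  shows "\<bar>dlC s x l i - dlN$i\<bar> \<le> 2 * b * norm (dxN, dlN) / c"
proof -
  have "\<bar>dxN$i\<bar> \<le> norm (dxN, dlN)"
    using component_le_norm_cart[of dxN i] norm_fst_le[of dxN dlN] by linarith
  moreover have "x$i * dlN$i + l$i * dxN$i = s - x$i * l$i"
    using Fprime_eq_neg_FmuD(2)[OF Newton] by (simp add: algebra_simps)
  ultimately show ?thesis
    unfolding dlC_def by (rule abs_centering_step_sub_Newton_le[OF assms(2-5)])
qed

lemma power2_norm_Pair_vec_eq_sum:
  "(norm (p::real^'n, q::real^'m))\<^sup>2 = (\<Sum>i\<in>UNIV. (p$i)\<^sup>2) + (\<Sum>j\<in>UNIV. (q$j)\<^sup>2)"
  unfolding norm_Pair norm_vec_def L2_set_def by (simp add: sum_nonneg)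

lemma norm_sub_le_norm_if_masked_error_le:
  fixes u v a b :: "real^'n" and P :: "'n \<Rightarrow> bool"
  assumes "\<And>i. \<not> P i \<Longrightarrow> a$i = 0" "\<And>i. P i \<Longrightarrow> b$i = 0"
    and "norm (\<chi> i. if P i then u$i - a$i else 0, \<chi> i. if \<not> P i then v$i - b$i else 0)
      \<le> norm (\<chi> i. if P i then u$i else 0, \<chi> i. if \<not> P i then v$i else 0)"
  shows "norm (u - a, v - b) \<le> norm (u, v)"
proof -
  define eu ev mu mv :: "real^'n"
    where "eu = (\<chi> i. if P i then u$i - a$i else 0)" and "ev = (\<chi> i. if \<not> P i then v$i - b$i else 0)"
      and "mu = (\<chi> i. if P i then u$i else 0)" and "mv = (\<chi> i. if \<not> P i then v$i else 0)"
  have "((u - a)$i)\<^sup>2 = (u$i)\<^sup>2 - (mu$i)\<^sup>2 + (eu$i)\<^sup>2"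
    and "((v - b)$i)\<^sup>2 = (v$i)\<^sup>2 - (mv$i)\<^sup>2 + (ev$i)\<^sup>2" for i
    using assms(1,2)[of i] by (auto simp: eu_def ev_def mu_def mv_def)
  hence "(norm (u - a, v - b))\<^sup>2 = (norm (u, v))\<^sup>2 - (norm (mu, mv))\<^sup>2 + (norm (eu, ev))\<^sup>2"
    unfolding power2_norm_Pair_vec_eq_sum by (simp add: sum.distrib sum_subtractf)
  also have "\<dots> \<le> (norm (u, v))\<^sup>2"
    using assms(3) by (simp add: eu_def ev_def mu_def mv_def power_mono)
  finally show ?thesis by (rule power2_le_imp_le) simp
qed

lemma norm_masked_step_error_le:
  fixes x l xs ls dxN dlN dx dl :: "real^'n"
  assumes Newton: "Fprime hess x l (dxN, dlN) = - Fmu s grad x l"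
    and c: "0 < c" "\<And>i. c \<le> xs$i + ls$i"
    and compl: "\<And>i. xs$i * ls$i = 0" and xs_nonneg: "\<And>i. 0 \<le> xs$i"
    and near: "norm ((x, l) - (xs, ls)) < c / 2"
    and pos: "\<And>i. 0 < x$i" "\<And>i. 0 < l$i"
    and small: "\<And>i. x$i * l$i \<le> b * c / 2"
    and H: "norm (hess x) \<le> H" "b * H \<le> c / 4"
    and dA: "\<And>i. xs$i = 0 \<Longrightarrow> dx$i = dxS grad hess s x l i \<or> dx$i = dxC s x l i"
    and dI: "\<And>i. xs$i \<noteq> 0 \<Longrightarrow> dl$i = dlC s x l i"
  shows "norm (\<chi> i. if xs$i = 0 then dxN$i - dx$i else 0, \<chi> i. if xs$i \<noteq> 0 then dlN$i - dl$i else 0)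
    \<le> 2 * real CARD('n) * ((8 * H + 2) * b * norm (dxN, dlN) / c)"
proof -
  define E where "E = (8 * H + 2) * b * norm (dxN, dlN) / c"
  have "0 \<le> H" using H(1) norm_ge_zero order_trans by blast
  have "0 < b * c / 2" using small[of undefined] mult_pos_pos[OF pos(1,2)] by (meson less_le_trans)
  hence "0 < b * c" by simp
  hence "0 < b" using c(1) by (simp add: zero_less_mult_iff)
  have "0 \<le> E" unfolding E_def using \<open>0 \<le> H\<close> \<open>0 < b\<close> c(1) by simp
  have "norm (x - xs, l - ls) < c / 2" using near by simp
  hence near_i: "\<bar>x$i - xs$i\<bar> < c / 2" "\<bar>l$i - ls$i\<bar> < c / 2" for i
    using component_le_norm_cart[of "x - xs" i] component_le_norm_cart[of "l - ls" i]
      norm_fst_le[of "x - xs" "l - ls"] norm_snd_le[of "l - ls" "x - xs"] by auto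
  have le_b: "y \<le> b" if "c / 2 \<le> z" "y * z \<le> b * c / 2" "0 \<le> y" for y z
  proof -
    have "y * (c / 2) \<le> b * (c / 2)" using that mult_left_mono[OF that(1,3)] by simp
    thus ?thesis using c(1) by simp
  qed
  have active: "\<bar>dxN$i - dx$i\<bar> \<le> E" if "xs$i = 0" for i
  proof -
    have "c / 2 \<le> l$i" using c(2)[of i] near_i(2)[of i] that by linarith
    moreover have "x$i \<le> b" using le_b[OF \<open>c / 2 \<le> l$i\<close> small] pos(1)[of i] by simp
    ultimately show ?thesis
      using active_step_sub_Newton_le[OF Newton c(1) _ _ _ H dA[OF that]] pos(1)[of i]
      unfolding E_def by (metis abs_minus_commute less_imp_le)
  qed
  have inactive: "\<bar>dlN$i - dl$i\<bar> \<le> E" if "xs$i \<noteq> 0" for i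
  proof -
    have "ls$i = 0" using compl[of i] that by simp
    hence "c / 2 \<le> x$i" using c(2)[of i] near_i(1)[of i] by linarith
    moreover have "l$i \<le> b" using le_b[OF \<open>c / 2 \<le> x$i\<close>] small[of i] pos(2)[of i]
      by (simp add: mult.commute)
    ultimately have "\<bar>dlC s x l i - dlN$i\<bar> \<le> 2 * b * norm (dxN, dlN) / c"
      using inactive_step_sub_Newton_le[OF Newton c(1)] pos(2)[of i] by (simp add: less_imp_le)
    also have "\<dots> \<le> E" unfolding E_def using \<open>0 \<le> H\<close> \<open>0 < b\<close> c(1)
      by (intro divide_right_mono mult_right_mono) auto
    finally show ?thesis using dI[OF that] abs_minus_commute by metis
  qed
  have "norm ((\<chi> i. if xs$i = 0 then dxN$i - dx$i else 0)::real^'n) \<le> real CARD('n) * E"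
    and "norm ((\<chi> i. if xs$i \<noteq> 0 then dlN$i - dl$i else 0)::real^'n) \<le> real CARD('n) * E"
    using active inactive \<open>0 \<le> E\<close> by (auto intro!: norm_le_card_mult)
  moreover note norm_Pair_le[of "(\<chi> i. if xs$i = 0 then dxN$i - dx$i else 0)::real^'n"
      "(\<chi> i. if xs$i \<noteq> 0 then dlN$i - dl$i else 0)::real^'n"]
  ultimately show ?thesis unfolding E_def[symmetric] by linarith
qed

lemma continuous_at_imp_norm_bounded_near:
  assumes "isCont g a"
  obtains r where "0 < r" "\<And>y. dist y a < r \<Longrightarrow> norm (g y) \<le> norm (g a) + 1"
proof -
  obtain r where "0 < r" "\<And>y. dist y a < r \<Longrightarrow> dist (g y) (g a) < 1"
    using assms unfolding continuous_at_eps_delta by (metis zero_less_one)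
  moreover have "norm (g y) \<le> norm (g a) + dist (g y) (g a)" for y
    using norm_triangle_ineq2[of "g y" "g a"] unfolding dist_norm by linarith
  ultimately show ?thesis using that by (smt (verit))
qed

lemma mult_power2_le_powr:
  fixes Q C mu gamma :: real
  assumes "0 \<le> Q" "0 < C" "gamma < 2" "0 < mu" "mu \<le> (C / (Q + 1)) powr (1 / (2 - gamma))"
  shows "Q * mu\<^sup>2 \<le> C * mu powr gamma"
proof -
  have "mu powr (2 - gamma) \<le> ((C / (Q + 1)) powr (1 / (2 - gamma))) powr (2 - gamma)"
    using assms by (intro powr_mono2) auto
  also have "\<dots> = C / (Q + 1)" unfolding powr_powr using assms by simp
  finally have "Q * mu powr (2 - gamma) \<le> Q * (C / (Q + 1))"
    using assms(1) by (rule mult_left_mono)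
  also have "\<dots> \<le> C" using assms(1,2) by (simp add: field_simps)
  finally have "mu powr gamma * (Q * mu powr (2 - gamma)) \<le> mu powr gamma * C"
    by (intro mult_left_mono) auto
  moreover have "mu\<^sup>2 = mu powr gamma * mu powr (2 - gamma)"
    using assms(4) powr_realpow[of mu 2] by (simp add: powr_add[symmetric])
  ultimately show ?thesis by (simp add: algebra_simps)
qed

theorem proposition3:
  fixes f :: "real^'n \<Rightarrow> real"
    and grad :: "real^'n \<Rightarrow> real^'n"
    and hess :: "real^'n \<Rightarrow> real^'n^'n"
    and xs ls :: "real^'n"
    and delta M muhat C4 :: real
    and traj :: "real \<Rightarrow> (real^'n) \<times> (real^'n)"
    and sigma C1 gamma C8 :: real
  assumes grad: "\<And>x. (f has_derivative (\<lambda>h. grad x \<bullet> h)) (at x)"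
    and hess: "\<And>x. (grad has_derivative (\<lambda>h. hess x *v h)) (at x)"
    and hess_cont: "continuous_on UNIV hess"
    and hess_loclip: "\<And>x. \<exists>e>0. \<exists>L. L-lipschitz_on (cball x e) hess"
    and kkt_grad: "grad xs = ls"
    and xs_nonneg: "\<And>i. xs$i \<ge> 0"
    and ls_nonneg: "\<And>i. ls$i \<ge> 0"
    and compl: "\<And>i. xs$i * ls$i = 0"
    and strict_compl: "\<And>i. xs$i + ls$i > 0"
    and hessII_pd: "\<And>v. v \<noteq> 0 \<Longrightarrow> (\<forall>i. xs$i = 0 \<longrightarrow> v$i = 0) \<Longrightarrow> v \<bullet> (hess xs *v v) > 0"
    and delta_pos: "delta > 0"
    and Fprime_nonsing: "\<And>x l. (x, l) \<in> cball (xs, ls) delta \<Longrightarrow>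
           bij (Fprime hess x l) \<and> onorm (inv (Fprime hess x l)) \<le> M"
    and muhat_pos: "muhat > 0"
    and traj_lip: "\<exists>L. L-lipschitz_on {0<..muhat} traj"
    and traj_ball: "\<And>mu. mu \<in> {0<..muhat} \<Longrightarrow> traj mu \<in> cball (xs, ls) delta"
    and traj_zero: "\<And>mu. mu \<in> {0<..muhat} \<Longrightarrow> Fmu mu grad (fst (traj mu)) (snd (traj mu)) = 0"
    and traj_dist: "\<And>mu. mu \<in> {0<..muhat} \<Longrightarrow> norm (traj mu - (xs, ls)) \<le> C4 * mu"
    and sigma: "0 < sigma" "sigma < 1"
    and C1: "C1 > 0"
    and gamma: "0 \<le> gamma" "gamma < 2"
    and C8: "C8 > 0"
  shows "\<exists>rho>0. \<exists>mubar. 0 < mubar \<and> mubar \<le> muhat \<and>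
     (\<forall>mu x l dxN dlN dx dl.
        0 < mu \<and> mu \<le> mubar
        \<and> (x, l) \<in> cball (xs, ls) delta
        \<and> (\<forall>i. x$i > 0) \<and> (\<forall>i. l$i > 0)
        \<and> norm ((x, l) - traj mu) < rho
        \<and> norm (Fmu mu grad x l) \<le> C1 * mu
        \<and> Fprime hess x l (dxN, dlN) = - Fmu (sigma * mu) grad x l
        \<and> norm ((\<chi> i. if xs$i = 0 then dxN$i else 0, \<chi> i. if xs$i > 0 then dlN$i else 0)
               :: (real^'n) \<times> (real^'n)) \<ge> C8 * mu powr gamma
        \<and> (\<forall>i. xs$i = 0 \<longrightarrow> (dx$i = dxS grad hess (sigma * mu) x l i
                                \<or> dx$i = dxC (sigma * mu) x l i) \<and> dl$i = 0)
        \<and> (\<forall>i. xs$i > 0 \<longrightarrow> dx$i = 0 \<and> dl$i = dlC (sigma * mu) x l i)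
      \<longrightarrow> norm ((x + dxN, l + dlN) - (x + dx, l + dl))
            \<le> norm ((x + dxN, l + dlN) - (x, l)))"
proof -
  define c where "c = Min (range (\<lambda>i. xs$i + ls$i))"
  have c: "0 < c" "\<And>i. c \<le> xs$i + ls$i"
    unfolding c_def using strict_compl by simp_all
  define H where "H = norm (hess xs) + 1"
  obtain r where r: "0 < r" and hess_bound: "\<And>y. dist y xs < r \<Longrightarrow> norm (hess y) \<le> H"
    using continuous_at_imp_norm_bounded_near hess_cont unfolding H_def
    by (metis continuous_on_eq_continuous_at open_UNIV UNIV_I)
  define B where "B = 2 * (1 + C1) / c"
  define Q where "Q = 2 * real CARD('n) * ((8 * H + 2) * B * (\<bar>M\<bar> * (C1 + real CARD('n))) / c)"
  define mubar where "mubar = min muhat (min (c / (4 * (\<bar>C4\<bar> + 1))) (min (r / (2 * (\<bar>C4\<bar> + 1)))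
    (min (c / (4 * B * H)) ((C8 / (Q + 1)) powr (1 / (2 - gamma))))))"
  define rho where "rho = min (c / 4) (r / 2)"
  have "0 < B" unfolding B_def using C1 c(1) by simp
  have "0 < H" unfolding H_def by (simp add: add_nonneg_pos)
  have "0 \<le> Q" unfolding Q_def using \<open>0 < B\<close> \<open>0 < H\<close> C1 c(1) by simp
  have "0 < rho" unfolding rho_def using c(1) r by simp
  have "0 < mubar" "mubar \<le> muhat"
    unfolding mubar_def using muhat_pos c(1) r \<open>0 < B\<close> \<open>0 < H\<close> C8 \<open>0 \<le> Q\<close> by simp_all
  have key: "norm ((x + dxN, l + dlN) - (x + dx, l + dl)) \<le> norm ((x + dxN, l + dlN) - (x, l))"
    if mu: "0 < mu" "mu \<le> mubar" and xl: "(x, l) \<in> cball (xs, ls) delta"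
      and pos: "\<forall>i. x$i > 0" "\<forall>i. l$i > 0"
      and near: "norm ((x, l) - traj mu) < rho"
      and Fb: "norm (Fmu mu grad x l) \<le> C1 * mu"
      and Newton: "Fprime hess x l (dxN, dlN) = - Fmu (sigma * mu) grad x l"
      and big: "norm ((\<chi> i. if xs$i = 0 then dxN$i else 0, \<chi> i. if xs$i > 0 then dlN$i else 0)
               :: (real^'n) \<times> (real^'n)) \<ge> C8 * mu powr gamma"
      and dA: "\<forall>i. xs$i = 0 \<longrightarrow> (dx$i = dxS grad hess (sigma * mu) x l i
                                \<or> dx$i = dxC (sigma * mu) x l i) \<and> dl$i = 0"
      and dI: "\<forall>i. xs$i > 0 \<longrightarrow> dx$i = 0 \<and> dl$i = dlC (sigma * mu) x l i"
    for mu x l dxN dlN dx dl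
  proof -
    have inactive_iff: "0 < xs$i \<longleftrightarrow> xs$i \<noteq> 0" for i using xs_nonneg[of i] by linarith
    have mu_small: "(\<bar>C4\<bar> + 1) * mu \<le> c / 4" "(\<bar>C4\<bar> + 1) * mu \<le> r / 2" "B * mu * H \<le> c / 4"
      "mu \<le> (C8 / (Q + 1)) powr (1 / (2 - gamma))"
      using mu c(1) r \<open>0 < B\<close> \<open>0 < H\<close> unfolding mubar_def by (simp_all add: field_simps)
    have "norm ((x, l) - (xs, ls)) \<le> norm ((x, l) - traj mu) + norm (traj mu - (xs, ls))"
      using norm_triangle_ineq[of "(x, l) - traj mu" "traj mu - (xs, ls)"] by simp
    also have "\<dots> < rho + (\<bar>C4\<bar> + 1) * mu"
      using near traj_dist[of mu] mu \<open>mubar \<le> muhat\<close> abs_ge_self[of C4]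
      by (smt (verit) greaterThanAtMost_iff mult_right_mono)
    finally have near_kkt: "norm ((x, l) - (xs, ls)) < min (c / 2) r"
      unfolding min_less_iff_conj using mu_small(1,2) unfolding rho_def by linarith
    have "norm (hess x) \<le> H"
      using hess_bound near_kkt norm_fst_le[of "x - xs" "l - ls"] by (simp add: dist_norm)
    have "(B * mu) * c / 2 = (1 + C1) * mu" unfolding B_def using c(1) by simp
    hence "x$i * l$i \<le> (B * mu) * c / 2" for i
      using abs_complementarity_le_norm_Fmu[of l i x mu grad] Fb
      by (simp add: abs_le_iff algebra_simps)
    moreover have "B * mu * H \<le> c / 4" using mu_small(3) .
    moreover have "norm ((x, l) - (xs, ls)) < c / 2" using near_kkt by simp
    ultimately have "norm (\<chi> i. if xs$i = 0 then dxN$i - dx$i else 0, \<chi> i. if xs$i \<noteq> 0 then dlN$i - dl$i else 0)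
      \<le> 2 * real CARD('n) * ((8 * H + 2) * (B * mu) * norm (dxN, dlN) / c)"
      using pos dA dI inactive_iff
      by (intro norm_masked_step_error_le[OF Newton c compl xs_nonneg _ _ _ _ \<open>norm (hess x) \<le> H\<close>])
        auto
    also have "\<dots> = (2 * real CARD('n) * (8 * H + 2) * B * mu / c) * norm (dxN, dlN)"
      by simp
    also have "\<dots> \<le> (2 * real CARD('n) * (8 * H + 2) * B * mu / c) * (\<bar>M\<bar> * (C1 + real CARD('n)) * mu)"
      using norm_Newton_step_le[OF _ _ Newton Fb mu(1) sigma] Fprime_nonsing[OF xl]
        \<open>0 < B\<close> \<open>0 < H\<close> c(1) mu(1) by (intro mult_left_mono) auto
    also have "\<dots> = Q * mu\<^sup>2" unfolding Q_def by (simp add: power2_eq_square)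
    also have "\<dots> \<le> C8 * mu powr gamma"
      using mult_power2_le_powr \<open>0 \<le> Q\<close> C8 gamma mu(1) mu_small(4) by blast
    also have "\<dots> \<le> norm (\<chi> i. if xs$i = 0 then dxN$i else 0, \<chi> i. if xs$i \<noteq> 0 then dlN$i else 0)"
      using big inactive_iff by simp
    finally have "norm (dxN - dx, dlN - dl) \<le> norm (dxN, dlN)"
      using dA dI inactive_iff by (intro norm_sub_le_norm_if_masked_error_le) auto
    thus ?thesis by simp
  qed
  show ?thesis
    by (intro exI[of _ rho] exI[of _ mubar] conjI allI impI \<open>0 < rho\<close> \<open>0 < mubar\<close> \<open>mubar \<le> muhat\<close>)
      (elim conjE, rule key; assumption)
qed

end
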